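(* Let $\mathcal{M}$ be either (a) the space of graph Laplacians of simple, undirected, weighted networks with a fixed number $m$ of nodes and bounded edge weights, or (b) the space of $m\times m$ covariance matrices with bounded diagonal entries, equipped with the Frobenius distance $d_F$, and with geodesic transport maps $\Gamma_{\alpha,\beta}(\omega)=\omega+(\beta-\alpha)$. Then: (1) there is $C_1>0$ with $d_F(\Gamma_{\alpha,\beta}(\omega),\Gamma_{\alpha,\beta}(\zeta))\le C_1d_F(\omega,\zeta)$ for all $\alpha,\beta,\omega,\zeta\in\mathcal{M}$; (2) there is $C_2>0$ with $d_F(\Gamma_{\alpha_1,\beta_1}(\omega),\Gamma_{\alpha_2,\beta_2}(\omega))\le C_2\{d_F(\alpha_1,\alpha_2)+d_F(\beta_1,\beta_2)\}$ for all $\alpha_1,\alpha_2,\beta_1,\beta_2,\omega\in\mathcal{M}$; (3) for every random element $Y$ of $\mathcal{M}$: (i) the Fréchet mean $\nu=\operatorname{argmin}_{\omega\in\mathcal{M}}E\,d_F^2(Y,\omega)$ exists and is unique, the empirical Fréchet mean of an i.i.d. sample exists and is unique almost surely, and $\inf_{d_F(\nu,\omega)>\varepsilon}E\,d_F^2(Y,\omega)>E\,d_F^2(Y,\nu)$ for every $\varepsilon>0$; (ii) $\int_0^1\sqrt{1+\log N(\delta\epsilon,B_\delta(\nu),d_F)}\,d\epsilon=O(1)$ as $\delta\to0$, with $B_\delta(\nu)$ the $\delta$-ball around $\nu$ and $N(\cdot)$ its covering number; (iii) there are $\eta>0$, $C>0$, $\kappa>1$ with $E\,d_F^2(Y,\omega)-E\,d_F^2(Y,\nu)\ge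 C\,d_F^\kappa(\nu,\omega)$ whenever $d_F(\nu,\omega)<\eta$.
   Context: The graph Laplacian of a weighted network with adjacency (weight) matrix $W$ is $\mathrm{diag}(W\mathbf{1})-W$; it uniquely represents the network. $d_F(A,B)=\|A-B\|_F$ is the Frobenius distance. *)

theory Defs
  imports "HOL-Probability.Probability" "HOL-Library.Landau_Symbols"
begin

text \<open>m x m real matrices are modelled as real^'m^'m with 'm a finite index type
  (the fixed number m of nodes is CARD('m)).\<close>

definition frob_dist :: "real^'m^'m \<Rightarrow> real^'m^'m \<Rightarrow> real" where
  "frob_dist A B = sqrt (\<Sum>i\<in>UNIV. \<Sum>j\<in>UNIV. (A$i$j - B$i$j)^2)"

definition graph_laplacian :: "real^'m^'m \<Rightarrow> real^'m^'m" where
  "graph_laplacian W = (\<chi> i j. (if i = j then (\<Sum>k\<in>UNIV. W$i$k) else 0) - W$i$j)"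

definition laplacian_space :: "real \<Rightarrow> (real^'m^'m) set" where
  "laplacian_space c = {graph_laplacian W | W.
      (\<forall>i j. W$i$j = W$j$i) \<and> (\<forall>i. W$i$i = 0) \<and> (\<forall>i j. 0 \<le> W$i$j \<and> W$i$j \<le> c)}"

definition covariance_space :: "real \<Rightarrow> (real^'m^'m) set" where
  "covariance_space c = {S. transpose S = S \<and> (\<forall>x. 0 \<le> x \<bullet> (S *v x)) \<and> (\<forall>i. S$i$i \<le> c)}"

definition transport :: "real^'m^'m \<Rightarrow> real^'m^'m \<Rightarrow> real^'m^'m \<Rightarrow> real^'m^'m" where
  "transport \<alpha> \<beta> \<omega> = \<omega> + (\<beta> - \<alpha>)"

definition frob_ball :: "(real^'m^'m) set \<Rightarrow> real^'m^'m \<Rightarrow> real \<Rightarrow> (real^'m^'m) set" where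
  "frob_ball M \<nu> r = {\<omega> \<in> M. frob_dist \<nu> \<omega> < r}"

definition covering_number :: "(real^'m^'m) set \<Rightarrow> real \<Rightarrow> (real^'m^'m) set \<Rightarrow> nat" where
  "covering_number M r S = (LEAST n. \<exists>C. finite C \<and> card C = n \<and> C \<subseteq> M \<and>
      S \<subseteq> (\<Union>c\<in>C. {x. frob_dist c x \<le> r}))"

end

theory Submission
  imports Defs
begin

text \<open>Both spaces are compact convex subsets of the Euclidean space of \<open>m \<times> m\<close> matrices, whose
  norm is the Frobenius norm: Laplacians form a linear image of a box of weight matrices, and a
  positive semidefinite matrix has \<open>2 \<bar>S\<^sub>i\<^sub>j\<bar> \<le> S\<^sub>i\<^sub>i + S\<^sub>j\<^sub>j\<close>.
  The transport maps are translations, hence isometries.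

  For a bounded random matrix \<open>Y\<close> the bias-variance identity
  \<open>E d\<^sup>2(Y,\<omega>) = E d\<^sup>2(Y, E Y) + d\<^sup>2(E Y, \<omega>)\<close> shows that the Frechet mean is the metric
  projection \<open>\<nu>\<close> of \<open>E Y\<close> onto \<open>M\<close>, and the obtuse-angle property of projections onto convex
  sets gives the quadratic growth \<open>E d\<^sup>2(Y,\<omega>) \<ge> E d\<^sup>2(Y,\<nu>) + d\<^sup>2(\<nu>,\<omega>)\<close> on \<open>M\<close>. Uniqueness,
  well-separatedness and the curvature condition with \<open>\<kappa> = 2\<close> all follow from it, and the same
  argument applied to the empirical measure handles sample means.

  Finally, a grid of mesh \<open>\<delta>\<epsilon>/\<surd>D\<close> (with \<open>D = m\<^sup>2\<close>) covers a \<open>\<delta>\<close>-ball with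
  \<open>(2\<lceil>\<surd>D/\<epsilon>\<rceil> + 1)\<^sup>D\<close> balls of radius \<open>\<delta>\<epsilon>\<close>, so the entropy integrand is \<open>O(\<epsilon> powr (-1/2))\<close>
  uniformly in \<open>\<delta>\<close> and its integral over \<open>[0,1]\<close> stays bounded.\<close>

section \<open>The spaces of Laplacians and of covariance matrices\<close>

lemma dist_matrix: "dist A B = sqrt (\<Sum>i\<in>UNIV. \<Sum>j\<in>UNIV. (A$i$j - B$i$j)^2)"
  for A B :: "real^'n^'m"
  by (simp add: dist_norm norm_vec_def L2_set_def sum_nonneg)

lemma frob_dist_eq_dist: "frob_dist A B = dist A B"
  by (simp add: frob_dist_def dist_matrix)

lemma frob_ball_eq: "frob_ball M \<nu> \<delta> = M \<inter> ball \<nu> \<delta>"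
  by (auto simp: frob_ball_def frob_dist_eq_dist)

lemma bounded_if_entries_bounded:
  fixes S :: "(real^'n^'m) set"
  assumes "\<And>A i j. A \<in> S \<Longrightarrow> \<bar>A$i$j\<bar> \<le> B"
  shows "bounded S"
proof -
  have "norm A \<le> (\<Sum>i\<in>(UNIV::'m set). \<Sum>j\<in>(UNIV::'n set). B)" if "A \<in> S" for A
  proof -
    have "norm A \<le> (\<Sum>i\<in>UNIV. norm (A$i))"
      by (simp add: norm_vec_def L2_set_le_sum)
    also have "\<dots> \<le> (\<Sum>i\<in>UNIV. \<Sum>j\<in>UNIV. \<bar>A$i$j\<bar>)"
      by (intro sum_mono norm_le_l1_cart)
    also have "\<dots> \<le> (\<Sum>i\<in>(UNIV::'m set). \<Sum>j\<in>(UNIV::'n set). B)"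
      by (intro sum_mono assms[OF that])
    finally show ?thesis .
  qed
  then show ?thesis
    unfolding bounded_iff by blast
qed

definition weight_matrices :: "real \<Rightarrow> (real^'m^'m) set" where
  "weight_matrices c = {W. (\<forall>i j. W$i$j = W$j$i) \<and> (\<forall>i. W$i$i = 0) \<and> (\<forall>i j. 0 \<le> W$i$j \<and> W$i$j \<le> c)}"

lemma laplacian_space_eq_image: "laplacian_space c = graph_laplacian ` weight_matrices c"
  unfolding laplacian_space_def weight_matrices_def by auto

lemma linear_graph_laplacian: "linear graph_laplacian"
  by (rule linearI)
    (auto simp: graph_laplacian_def vec_eq_iff sum.distrib sum_distrib_left algebra_simps)

lemma compact_weight_matrices: "compact (weight_matrices c)"
proof -
  have "closed (weight_matrices c)"
    unfolding weight_matrices_def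
    by (intro closed_Collect_conj closed_Collect_all closed_Collect_eq closed_Collect_le
        continuous_intros)
  moreover have "bounded (weight_matrices c)"
    by (rule bounded_if_entries_bounded[where B = c]) (simp add: weight_matrices_def)
  ultimately show ?thesis
    by (simp add: compact_eq_bounded_closed)
qed

lemma convex_weight_matrices: "convex (weight_matrices c)"
  unfolding convex_alt weight_matrices_def
  by (auto simp: convex_bound_le)

lemma compact_laplacian_space: "compact (laplacian_space c)"
  unfolding laplacian_space_eq_image
  by (intro compact_continuous_image compact_weight_matrices linear_continuous_on
      linear_conv_bounded_linear[THEN iffD1] linear_graph_laplacian)

lemma convex_laplacian_space: "convex (laplacian_space c)"
  unfolding laplacian_space_eq_image
  by (intro convex_linear_image convex_weight_matrices linear_graph_laplacian)

lemma zero_in_laplacian_space: "0 \<le> c \<Longrightarrow> 0 \<in> laplacian_space c"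
  unfolding laplacian_space_eq_image
  by (rule image_eqI[of _ _ 0]) (auto simp: graph_laplacian_def vec_eq_iff weight_matrices_def)

lemma quadratic_form_axis_pair:
  fixes S :: "real^'m^'m"
  shows "(axis i 1 + s *\<^sub>R axis j 1) \<bullet> (S *v (axis i 1 + s *\<^sub>R axis j 1))
       = S$i$i + s * S$j$i + s * S$i$j + s * s * S$j$j"
  by (simp add: matrix_vector_right_distrib matrix_vector_mult_basis matrix_vector_mult_scaleR
      inner_axis inner_axis' column_def algebra_simps)

lemma psd_entry_bound:
  fixes S :: "real^'m^'m"
  assumes "transpose S = S" and "\<And>x. 0 \<le> x \<bullet> (S *v x)"
  shows "2 * \<bar>S$i$j\<bar> \<le> S$i$i + S$j$j"
proof -
  have "S$j$i = S$i$j"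
    using assms(1) by (metis transpose_def vec_lambda_beta)
  moreover have "0 \<le> S$i$i + s * S$j$i + s * S$i$j + s * s * S$j$j" for s
    using assms(2)[of "axis i 1 + s *\<^sub>R axis j 1"] by (simp only: quadratic_form_axis_pair)
  from this[of 1] this[of "-1"] have "0 \<le> S$i$i + S$j$i + S$i$j + S$j$j" "0 \<le> S$i$i - S$j$i - S$i$j + S$j$j"
    by simp_all
  ultimately show ?thesis
    by linarith
qed

lemma closed_covariance_space: "closed (covariance_space c)"
proof -
  have "covariance_space c = {S. (\<forall>i j. S$i$j = S$j$i) \<and>
      (\<forall>x. 0 \<le> (\<Sum>i\<in>UNIV. x$i * (\<Sum>j\<in>UNIV. S$i$j * x$j))) \<and> (\<forall>i. S$i$i \<le> c)}"
    unfolding covariance_space_def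
    by (auto simp: vec_eq_iff transpose_def inner_vec_def matrix_vector_mult_def)
  also have "closed \<dots>"
    by (intro closed_Collect_conj closed_Collect_all closed_Collect_eq closed_Collect_le
        continuous_intros)
  finally show ?thesis .
qed

lemma compact_covariance_space: "compact (covariance_space c :: (real^'m^'m) set)"
proof -
  have "bounded (covariance_space c :: (real^'m^'m) set)"
  proof (rule bounded_if_entries_bounded[where B = c])
    fix S :: "real^'m^'m" and i j
    assume "S \<in> covariance_space c"
    then have "2 * \<bar>S$i$j\<bar> \<le> S$i$i + S$j$j" "S$i$i \<le> c" "S$j$j \<le> c"
      unfolding covariance_space_def by (auto intro: psd_entry_bound)
    then show "\<bar>S$i$j\<bar> \<le> c"
      by linarith
  qed
  with closed_covariance_space show ?thesis
    by (simp add: compact_eq_bounded_closed)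
qed

lemma convex_covariance_space: "convex (covariance_space c)"
  unfolding convex_alt covariance_space_def
  by (auto simp: transpose_def vec_eq_iff matrix_vector_mult_add_rdistrib inner_add_right
      scaleR_matrix_vector_assoc[symmetric] convex_bound_le)

lemma zero_in_covariance_space: "0 \<le> c \<Longrightarrow> 0 \<in> covariance_space c"
  by (simp add: covariance_space_def transpose_def vec_eq_iff)

section \<open>Frechet means in closed convex sets\<close>

lemma dist_sq_expand:
  fixes y m w :: "'a::real_inner"
  shows "(dist y w)^2 = (dist y m)^2 + 2 * ((y - m) \<bullet> (m - w)) + (dist m w)^2"
proof -
  have "y - w = (y - m) + (m - w)"
    by simp
  then show ?thesis
    using dot_norm[of "y - m" "m - w"] by (simp add: dist_norm)
qed

lemma closest_point_pythagoras:
  fixes M :: "'a::euclidean_space set"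
  assumes "convex M" "closed M" "\<omega> \<in> M"
  shows "(dist z (closest_point M z))^2 + (dist (closest_point M z) \<omega>)^2 \<le> (dist z \<omega>)^2"
proof -
  define p where "p = closest_point M z"
  have "(z - p) \<bullet> (\<omega> - p) \<le> 0"
    unfolding p_def by (rule closest_point_dot[OF assms])
  moreover have "(dist z \<omega>)^2 = (dist z p)^2 + 2 * ((z - p) \<bullet> (p - \<omega>)) + (dist p \<omega>)^2"
    by (rule dist_sq_expand)
  moreover have "(z - p) \<bullet> (p - \<omega>) = - ((z - p) \<bullet> (\<omega> - p))"
    by (simp add: inner_diff_right)
  ultimately show ?thesis
    unfolding p_def by linarith
qed

lemma quadratic_growth_at_closest_point:
  fixes M :: "'a::euclidean_space set"
  assumes "convex M" "closed M" "\<omega> \<in> M" "0 \<le> a" "\<And>\<omega>. F \<omega> = K + a * (dist z \<omega>)^2"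
  shows "F (closest_point M z) + a * (dist (closest_point M z) \<omega>)^2 \<le> F \<omega>"
  using mult_left_mono[OF closest_point_pythagoras[OF assms(1-3), of z] assms(4)]
  by (simp add: assms(5) algebra_simps)

lemma unique_minimizer_of_quadratic_growth:
  assumes "0 < a" "\<And>\<omega>. \<omega> \<in> M \<Longrightarrow> F \<nu> + a * (dist \<nu> \<omega>)^2 \<le> F \<omega>"
    and "\<nu>' \<in> M" "\<And>\<omega>. \<omega> \<in> M \<Longrightarrow> F \<nu>' \<le> F \<omega>" "\<nu> \<in> M"
  shows "\<nu>' = \<nu>"
proof -
  have "a * (dist \<nu> \<nu>')^2 \<le> 0"
    using assms(2)[OF assms(3)] assms(4)[OF assms(5)] by linarith
  then show ?thesis
    using assms(1) by (simp add: mult_le_0_iff)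
qed

lemma well_separated_of_quadratic_growth:
  assumes "0 < a" "\<And>\<omega>. \<omega> \<in> M \<Longrightarrow> F \<nu> + a * (dist \<nu> \<omega>)^2 \<le> F \<omega>" "0 < \<epsilon>"
  shows "ereal (F \<nu>) < (INF \<omega>\<in>{\<omega>\<in>M. \<epsilon> < dist \<nu> \<omega>}. ereal (F \<omega>))"
proof -
  have "ereal (F \<nu> + a * \<epsilon>^2) \<le> (INF \<omega>\<in>{\<omega>\<in>M. \<epsilon> < dist \<nu> \<omega>}. ereal (F \<omega>))"
  proof (rule INF_greatest)
    fix \<omega> assume "\<omega> \<in> {\<omega>\<in>M. \<epsilon> < dist \<nu> \<omega>}"
    then have "\<omega> \<in> M" "a * \<epsilon>^2 \<le> a * (dist \<nu> \<omega>)^2"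
      using assms(1,3) by (auto intro!: mult_left_mono power_mono)
    then show "ereal (F \<nu> + a * \<epsilon>^2) \<le> ereal (F \<omega>)"
      using assms(2)[of \<omega>] by simp
  qed
  moreover have "ereal (F \<nu>) < ereal (F \<nu> + a * \<epsilon>^2)"
    using assms by simp
  ultimately show ?thesis
    by order
qed

lemma expected_sq_dist_decomp:
  fixes Y :: "'b \<Rightarrow> 'a::euclidean_space"
  assumes "prob_space P" "Y \<in> borel_measurable P" "\<And>x. x \<in> space P \<Longrightarrow> norm (Y x) \<le> B"
  defines "\<mu> \<equiv> \<integral>x. Y x \<partial>P"
  shows "(\<integral>x. (dist (Y x) \<omega>)^2 \<partial>P) = (\<integral>x. (dist (Y x) \<mu>)^2 \<partial>P) + (dist \<mu> \<omega>)^2"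
proof -
  interpret prob_space P
    by (fact assms(1))
  have Y: "integrable P Y"
    using assms(2,3) by (intro integrable_const_bound[where B = B]) auto
  have sq: "integrable P (\<lambda>x. (dist (Y x) \<mu>)^2)"
  proof (rule integrable_const_bound[where B = "(B + norm \<mu>)^2"])
    show "AE x in P. norm ((dist (Y x) \<mu>)^2) \<le> (B + norm \<mu>)^2"
    proof (rule AE_I2)
      fix x assume "x \<in> space P"
      then have "dist (Y x) \<mu> \<le> B + norm \<mu>"
        using assms(3)[of x] norm_triangle_ineq4[of "Y x" \<mu>] by (simp add: dist_norm)
      then show "norm ((dist (Y x) \<mu>)^2) \<le> (B + norm \<mu>)^2"
        by (simp add: power_mono)
    qed
  qed (use assms(2) in measurable)
  have centred: "(\<integral>x. (Y x - \<mu>) \<bullet> (\<mu> - \<omega>) \<partial>P) = 0"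
    using Y by (simp add: \<mu>_def prob_space)
  have "(\<integral>x. (dist (Y x) \<omega>)^2 \<partial>P)
      = (\<integral>x. (dist (Y x) \<mu>)^2 + 2 * ((Y x - \<mu>) \<bullet> (\<mu> - \<omega>)) + (dist \<mu> \<omega>)^2 \<partial>P)"
    by (intro Bochner_Integration.integral_cong refl dist_sq_expand)
  also have "\<dots> = (\<integral>x. (dist (Y x) \<mu>)^2 \<partial>P) + 2 * (\<integral>x. (Y x - \<mu>) \<bullet> (\<mu> - \<omega>) \<partial>P)
      + (dist \<mu> \<omega>)^2"
    using sq Y by (simp add: prob_space)
  finally show ?thesis
    unfolding centred by simp
qed

lemma sum_sq_dist_decomp:
  fixes y :: "nat \<Rightarrow> 'a::real_inner"
  assumes "0 < n"
  defines "m \<equiv> (1 / real n) *\<^sub>R (\<Sum>i<n. y i)"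
  shows "(\<Sum>i<n. (dist (y i) \<omega>)^2) = (\<Sum>i<n. (dist (y i) m)^2) + real n * (dist m \<omega>)^2"
proof -
  have centred: "(\<Sum>i<n. y i - m) = 0"
    using assms by (simp add: sum_subtractf m_def sum_constant_scaleR)
  have "(\<Sum>i<n. (dist (y i) \<omega>)^2) = (\<Sum>i<n. (dist (y i) m)^2 + 2 * ((y i - m) \<bullet> (m - \<omega>)) + (dist m \<omega>)^2)"
    by (intro sum.cong refl dist_sq_expand)
  also have "\<dots> = (\<Sum>i<n. (dist (y i) m)^2) + 2 * ((\<Sum>i<n. y i - m) \<bullet> (m - \<omega>)) + real n * (dist m \<omega>)^2"
    by (simp add: sum.distrib sum_distrib_left inner_sum_left)
  finally show ?thesis
    unfolding centred by simp
qed

lemma frechet_mean_quadratic_growth: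
  fixes M :: "'a::euclidean_space set" and Y :: "'b \<Rightarrow> 'a"
  assumes "compact M" "convex M" "M \<noteq> {}"
    and "prob_space P" "Y \<in> borel_measurable P" "\<And>x. x \<in> space P \<Longrightarrow> Y x \<in> M"
  obtains \<nu> where "\<nu> \<in> M"
    "\<And>\<omega>. \<omega> \<in> M \<Longrightarrow> (\<integral>x. (dist (Y x) \<nu>)^2 \<partial>P) + (dist \<nu> \<omega>)^2 \<le> (\<integral>x. (dist (Y x) \<omega>)^2 \<partial>P)"
proof -
  obtain B where "\<And>z. z \<in> M \<Longrightarrow> norm z \<le> B"
    using compact_imp_bounded[OF assms(1)] unfolding bounded_iff by metis
  then have bound: "\<And>x. x \<in> space P \<Longrightarrow> norm (Y x) \<le> B"
    using assms(6) by blast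
  define \<mu> where "\<mu> = (\<integral>x. Y x \<partial>P)"
  define F where "F \<omega> = (\<integral>x. (dist (Y x) \<omega>)^2 \<partial>P)" for \<omega>
  have "closed M"
    using assms(1) by (rule compact_imp_closed)
  have decomp: "F \<omega> = F \<mu> + 1 * (dist \<mu> \<omega>)^2" for \<omega>
    unfolding F_def \<mu>_def using expected_sq_dist_decomp[OF assms(4,5) bound, of \<omega>] by simp
  have "F (closest_point M \<mu>) + 1 * (dist (closest_point M \<mu>) \<omega>)^2 \<le> F \<omega>" if "\<omega> \<in> M" for \<omega>
    by (rule quadratic_growth_at_closest_point[OF assms(2) \<open>closed M\<close> that _ decomp]) simp
  moreover have "closest_point M \<mu> \<in> M"
    using \<open>closed M\<close> assms(3) by (rule closest_point_in_set)
  ultimately show ?thesis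
    using that unfolding F_def by simp
qed

lemma empirical_frechet_mean_unique:
  fixes M :: "'a::euclidean_space set" and y :: "nat \<Rightarrow> 'a"
  assumes "closed M" "convex M" "M \<noteq> {}" "0 < n"
  shows "\<exists>!\<omega>. \<omega> \<in> M \<and> (\<forall>\<zeta>\<in>M. (\<Sum>i<n. (dist (y i) \<omega>)^2) \<le> (\<Sum>i<n. (dist (y i) \<zeta>)^2))"
proof -
  define F where "F \<omega> = (\<Sum>i<n. (dist (y i) \<omega>)^2)" for \<omega>
  define m where "m = (1 / real n) *\<^sub>R (\<Sum>i<n. y i)"
  define \<nu> where "\<nu> = closest_point M m"
  have "\<nu> \<in> M"
    unfolding \<nu>_def using assms(1,3) by (rule closest_point_in_set)
  have decomp: "F \<omega> = F m + real n * (dist m \<omega>)^2" for \<omega>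
    unfolding F_def m_def by (rule sum_sq_dist_decomp[OF assms(4)])
  have growth: "F \<nu> + real n * (dist \<nu> \<omega>)^2 \<le> F \<omega>" if "\<omega> \<in> M" for \<omega>
    unfolding \<nu>_def by (rule quadratic_growth_at_closest_point[OF assms(2,1) that _ decomp]) simp
  show ?thesis
  proof (rule ex1I[of _ \<nu>])
    have "F \<nu> \<le> F \<omega>" if "\<omega> \<in> M" for \<omega>
    proof -
      have "0 \<le> real n * (dist \<nu> \<omega>)^2"
        by simp
      with growth[OF that] show ?thesis
        by linarith
    qed
    with \<open>\<nu> \<in> M\<close> show "\<nu> \<in> M \<and> (\<forall>\<zeta>\<in>M. (\<Sum>i<n. (dist (y i) \<nu>)^2) \<le> (\<Sum>i<n. (dist (y i) \<zeta>)^2))"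
      unfolding F_def by blast
  next
    fix \<omega> assume "\<omega> \<in> M \<and> (\<forall>\<zeta>\<in>M. (\<Sum>i<n. (dist (y i) \<omega>)^2) \<le> (\<Sum>i<n. (dist (y i) \<zeta>)^2))"
    then show "\<omega> = \<nu>"
      using unique_minimizer_of_quadratic_growth[of "real n" M F \<nu> \<omega>] growth \<open>\<nu> \<in> M\<close> assms(4)
      unfolding F_def by simp
  qed
qed

section \<open>Covering numbers and the entropy integral\<close>

lemma grid_cover:
  fixes S :: "(real^'n^'m) set"
  assumes "S \<subseteq> ball \<nu> \<delta>" "0 < \<delta>" "0 < r"
  defines "D \<equiv> CARD('m) * CARD('n)"
  obtains C where "finite C" "C \<subseteq> S" "S \<subseteq> (\<Union>c\<in>C. cball c r)"
    "card C \<le> (2 * nat \<lceil>\<delta> * sqrt D / r\<rceil> + 1) ^ D"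
proof -
  define h where "h = r / sqrt D"
  have "0 < D"
    by (simp add: D_def)
  then have "0 < h" and \<delta>_over_h: "\<delta> / h = \<delta> * sqrt D / r"
    using assms(3) by (simp_all add: h_def)
  define L where "L = \<lceil>\<delta> / h\<rceil>"
  \<comment> \<open>Cubes of side \<open>h\<close> have Frobenius diameter at most \<open>r\<close>; keep one point of \<open>S\<close> per occupied cube.\<close>
  define cell :: "real^'n^'m \<Rightarrow> 'm \<times> 'n \<Rightarrow> int"
    where "cell \<omega> = (\<lambda>(i, j). \<lfloor>(\<omega>$i$j - \<nu>$i$j) / h\<rfloor>)" for \<omega>
  define Box where "Box = PiE (UNIV :: ('m \<times> 'n) set) (\<lambda>_. {-L..L})"
  define C where "C = inv_into S cell ` cell ` S"
  have "cell ` S \<subseteq> Box"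
  proof clarify
    fix \<omega> assume "\<omega> \<in> S"
    have "cell \<omega> (i, j) \<in> {-L..L}" for i j
    proof -
      have "\<bar>(\<omega> - \<nu>)$i$j\<bar> \<le> norm (\<omega> - \<nu>)"
        by (rule order_trans[OF component_le_norm_cart Finite_Cartesian_Product.norm_nth_le])
      also have "\<dots> < \<delta>"
        using \<open>\<omega> \<in> S\<close> assms(1) by (auto simp: dist_norm norm_minus_commute)
      finally have "\<bar>(\<omega>$i$j - \<nu>$i$j) / h\<bar> < \<delta> / h"
        using \<open>0 < h\<close> by (simp add: abs_div divide_strict_right_mono)
      moreover have "\<delta> / h \<le> L"
        unfolding L_def by simp
      ultimately have "- L < (\<omega>$i$j - \<nu>$i$j) / h" "(\<omega>$i$j - \<nu>$i$j) / h < L"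
        by linarith+
      then show ?thesis
        by (simp add: cell_def le_floor_iff floor_le_iff)
    qed
    then show "cell \<omega> \<in> Box"
      unfolding Box_def by auto
  qed
  moreover have "finite Box"
    unfolding Box_def by (intro finite_PiE) auto
  ultimately have "finite C" "card C \<le> card Box"
    unfolding C_def by (auto intro: finite_subset card_image_le[THEN order_trans] card_mono)
  moreover have "C \<subseteq> S"
    unfolding C_def by (auto intro: inv_into_into)
  moreover have "S \<subseteq> (\<Union>c\<in>C. cball c r)"
  proof
    fix \<omega> assume "\<omega> \<in> S"
    define p where "p = inv_into S cell (cell \<omega>)"
    have "cell p = cell \<omega>"
      unfolding p_def using \<open>\<omega> \<in> S\<close> by (simp add: f_inv_into_f)
    have "\<bar>p$i$j - \<omega>$i$j\<bar> < h" for i j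
    proof -
      have "\<lfloor>(p$i$j - \<nu>$i$j) / h\<rfloor> = \<lfloor>(\<omega>$i$j - \<nu>$i$j) / h\<rfloor>"
        using fun_cong[OF \<open>cell p = cell \<omega>\<close>, of "(i, j)"] by (simp add: cell_def)
      then have "\<bar>(p$i$j - \<nu>$i$j) / h - (\<omega>$i$j - \<nu>$i$j) / h\<bar> < 1"
        by linarith
      then show ?thesis
        using \<open>0 < h\<close> by (simp add: diff_divide_distrib[symmetric] abs_div)
    qed
    then have "(p$i$j - \<omega>$i$j)^2 \<le> h^2" for i j
      by (metis abs_le_square_iff abs_of_pos \<open>0 < h\<close> less_imp_le)
    then have "dist p \<omega> \<le> sqrt (\<Sum>i\<in>(UNIV::'m set). \<Sum>j\<in>(UNIV::'n set). h^2)"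
      unfolding dist_matrix
      by (intro real_sqrt_le_mono sum_mono)
    also have "\<dots> = r"
      using \<open>0 < D\<close> assms(3) by (simp add: h_def D_def power_divide)
    finally show "\<omega> \<in> (\<Union>c\<in>C. cball c r)"
      using \<open>\<omega> \<in> S\<close> unfolding C_def p_def by auto
  qed
  moreover have "card Box = (2 * nat L + 1) ^ D"
  proof -
    have "0 < \<delta> / h"
      using \<open>0 < h\<close> assms(2) by simp
    then have "0 \<le> L"
      unfolding L_def by linarith
    then show ?thesis
      by (simp add: Box_def card_PiE D_def nat_add_distrib nat_mult_distrib flip: UNIV_Times_UNIV)
  qed
  ultimately show ?thesis
    using that[of C] \<delta>_over_h by (simp add: L_def)
qed

lemma covering_number_cball:
  "covering_number M r S = (LEAST n. \<exists>C. finite C \<and> card C = n \<and> C \<subseteq> M \<and> S \<subseteq> (\<Union>c\<in>C. cball c r))"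
  by (simp add: covering_number_def frob_dist_eq_dist cball_def)

lemma covering_number_le_card:
  assumes "finite C" "C \<subseteq> M" "S \<subseteq> (\<Union>c\<in>C. cball c r)"
  shows "covering_number M r S \<le> card C"
  unfolding covering_number_cball using assms by (blast intro: Least_le)

lemma covering_number_attained:
  assumes "finite C" "C \<subseteq> M" "S \<subseteq> (\<Union>c\<in>C. cball c r)"
  obtains C' where "finite C'" "C' \<subseteq> M" "S \<subseteq> (\<Union>c\<in>C'. cball c r)"
    "card C' = covering_number M r S"
  using LeastI_ex[of "\<lambda>n. \<exists>C. finite C \<and> card C = n \<and> C \<subseteq> M \<and> S \<subseteq> (\<Union>c\<in>C. cball c r)"]
    assms that unfolding covering_number_cball by blast

lemma covering_number_pos:
  assumes "finite C" "C \<subseteq> M" "S \<subseteq> (\<Union>c\<in>C. cball c r)" "S \<noteq> {}"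
  shows "0 < covering_number M r S"
proof -
  obtain C' where "finite C'" "S \<subseteq> (\<Union>c\<in>C'. cball c r)" "card C' = covering_number M r S"
    using covering_number_attained[OF assms(1-3)] by metis
  moreover have "C' \<noteq> {}"
    using assms(4) calculation(2) by auto
  ultimately show ?thesis
    by auto
qed

lemma covering_number_antimono:
  assumes "finite C" "C \<subseteq> M" "S \<subseteq> (\<Union>c\<in>C. cball c r)" "r \<le> r'"
  shows "covering_number M r' S \<le> covering_number M r S"
proof -
  obtain C' where "finite C'" "C' \<subseteq> M" "S \<subseteq> (\<Union>c\<in>C'. cball c r)"
    and card: "card C' = covering_number M r S"
    using covering_number_attained[OF assms(1-3)] .
  moreover have "(\<Union>c\<in>C'. cball c r) \<subseteq> (\<Union>c\<in>C'. cball c r')"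
    using assms(4) by auto
  ultimately show ?thesis
    using covering_number_le_card[of C' M S r'] by auto
qed

lemma covering_number_ball_le:
  fixes M :: "(real^'m^'m) set"
  assumes "S \<subseteq> M" "S \<subseteq> ball \<nu> \<delta>" "0 < \<delta>" "0 < r"
  defines "D \<equiv> CARD('m) * CARD('m)"
  shows "covering_number M r S \<le> (2 * nat \<lceil>\<delta> * sqrt D / r\<rceil> + 1) ^ D"
proof -
  obtain C where "finite C" "C \<subseteq> S" "S \<subseteq> (\<Union>c\<in>C. cball c r)"
    and "card C \<le> (2 * nat \<lceil>\<delta> * sqrt D / r\<rceil> + 1) ^ D"
    using grid_cover[OF assms(2-4)] unfolding D_def by metis
  moreover from calculation have "covering_number M r S \<le> card C"
    using assms(1) by (intro covering_number_le_card) auto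
  ultimately show ?thesis
    by linarith
qed

definition entropy_integrand :: "(real^'m^'m) set \<Rightarrow> real^'m^'m \<Rightarrow> real \<Rightarrow> real \<Rightarrow> real" where
  "entropy_integrand M \<nu> \<delta> \<epsilon> = sqrt (1 + ln (real (covering_number M (\<delta> * \<epsilon>) (frob_ball M \<nu> \<delta>))))"

lemma covering_number_frob_ball:
  assumes "\<nu> \<in> M" "0 < \<delta>" "0 < r"
  shows "0 < covering_number M r (frob_ball M \<nu> \<delta>)"
    and "r \<le> r' \<Longrightarrow> covering_number M r' (frob_ball M \<nu> \<delta>) \<le> covering_number M r (frob_ball M \<nu> \<delta>)"
proof -
  have "frob_ball M \<nu> \<delta> \<subseteq> ball \<nu> \<delta>"
    unfolding frob_ball_eq by blast
  then obtain C where C: "finite C" "C \<subseteq> frob_ball M \<nu> \<delta>" "frob_ball M \<nu> \<delta> \<subseteq> (\<Union>c\<in>C. cball c r)"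
    using grid_cover assms(2,3) by metis
  moreover have "C \<subseteq> M"
    using C(2) unfolding frob_ball_eq by blast
  moreover have "frob_ball M \<nu> \<delta> \<noteq> {}"
    using assms(1,2) unfolding frob_ball_eq by auto
  ultimately show "0 < covering_number M r (frob_ball M \<nu> \<delta>)"
    and "r \<le> r' \<Longrightarrow> covering_number M r' (frob_ball M \<nu> \<delta>) \<le> covering_number M r (frob_ball M \<nu> \<delta>)"
    by (simp_all add: covering_number_pos covering_number_antimono)
qed

lemma entropy_integrand_ge_1:
  assumes "\<nu> \<in> M" "0 < \<delta>" "0 < \<epsilon>"
  shows "1 \<le> entropy_integrand M \<nu> \<delta> \<epsilon>"
  using covering_number_frob_ball(1)[OF assms(1,2), of "\<delta> * \<epsilon>"] assms(2,3)
  by (simp add: entropy_integrand_def)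

lemma entropy_integrand_antimono:
  assumes "\<nu> \<in> M" "0 < \<delta>"
  shows "antimono_on {0<..} (entropy_integrand M \<nu> \<delta>)"
proof (rule monotone_onI)
  fix a b :: real
  assume "a \<in> {0<..}" "a \<le> b"
  then have "0 < covering_number M (\<delta> * b) (frob_ball M \<nu> \<delta>)"
    "covering_number M (\<delta> * b) (frob_ball M \<nu> \<delta>) \<le> covering_number M (\<delta> * a) (frob_ball M \<nu> \<delta>)"
    using covering_number_frob_ball[OF assms, of "\<delta> * b"] covering_number_frob_ball[OF assms, of "\<delta> * a"]
      assms(2) by auto
  then show "entropy_integrand M \<nu> \<delta> b \<le> entropy_integrand M \<nu> \<delta> a"
    by (simp add: entropy_integrand_def)
qed

lemma entropy_integrand_le:
  fixes M :: "(real^'m^'m) set"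
  assumes "\<nu> \<in> M" "0 < \<delta>" "0 < \<epsilon>" "\<epsilon> \<le> 1"
  defines "D \<equiv> real (CARD('m) * CARD('m))"
  shows "entropy_integrand M \<nu> \<delta> \<epsilon> \<le> 1 + sqrt (D * (2 * sqrt D + 3)) * \<epsilon> powr (-1/2)"
proof -
  define N where "N = covering_number M (\<delta> * \<epsilon>) (frob_ball M \<nu> \<delta>)"
  define K where "K = 2 * sqrt D + 3"
  have "1 \<le> CARD('m) * CARD('m)"
    by (simp add: Suc_leI)
  then have "1 \<le> D"
    unfolding D_def by (metis of_nat_1 of_nat_le_iff)
  then have "0 < K"
    unfolding K_def by (simp add: add_nonneg_pos)
  have "0 < N"
    unfolding N_def using covering_number_frob_ball(1)[OF assms(1,2), of "\<delta> * \<epsilon>"] assms(2,3) by simp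
  have "N \<le> (2 * nat \<lceil>\<delta> * sqrt D / (\<delta> * \<epsilon>)\<rceil> + 1) ^ (CARD('m) * CARD('m))"
    unfolding N_def D_def
    by (rule covering_number_ball_le) (use assms(2,3) in \<open>auto simp: frob_ball_eq\<close>)
  also have "\<delta> * sqrt D / (\<delta> * \<epsilon>) = sqrt D / \<epsilon>"
    using assms(2) by simp
  finally have "real N \<le> real (2 * nat \<lceil>sqrt D / \<epsilon>\<rceil> + 1) ^ (CARD('m) * CARD('m))"
    by (metis of_nat_le_iff of_nat_power)
  also have "\<dots> \<le> (K / \<epsilon>) ^ (CARD('m) * CARD('m))"
  proof (rule power_mono)
    have "0 \<le> sqrt D / \<epsilon>"
      using \<open>1 \<le> D\<close> assms(3) by simp
    then have "real (nat \<lceil>sqrt D / \<epsilon>\<rceil>) \<le> sqrt D / \<epsilon> + 1"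
      by (simp add: of_nat_nat of_int_ceiling_le_add_one)
    moreover have "3 \<le> 3 / \<epsilon>"
      using assms(3,4) by (simp add: field_simps)
    ultimately show "real (2 * nat \<lceil>sqrt D / \<epsilon>\<rceil> + 1) \<le> K / \<epsilon>"
      unfolding K_def by (simp add: add_divide_distrib)
  qed simp
  finally have "ln (real N) \<le> ln ((K / \<epsilon>) ^ (CARD('m) * CARD('m)))"
    using \<open>0 < N\<close> by (simp add: ln_mono)
  also have "\<dots> = D * ln (K / \<epsilon>)"
    using \<open>0 < K\<close> assms(3) by (simp add: D_def ln_realpow)
  also have "\<dots> \<le> D * (K / \<epsilon>)"
    using \<open>1 \<le> D\<close> \<open>0 < K\<close> assms(3) by (intro mult_left_mono less_imp_le[OF ln_less_self]) auto
  finally have "sqrt (1 + ln (real N)) \<le> sqrt (1 + D * K / \<epsilon>)"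
    by simp
  also have "\<dots> \<le> 1 + sqrt (D * K / \<epsilon>)"
    using sqrt_add_le_add_sqrt[of 1 "D * K / \<epsilon>"] \<open>1 \<le> D\<close> \<open>0 < K\<close> assms(3) by simp
  also have "sqrt (D * K / \<epsilon>) = sqrt (D * K) * \<epsilon> powr (-1/2)"
    using assms(3) by (simp add: real_sqrt_divide powr_minus_divide powr_half_sqrt)
  finally show ?thesis
    unfolding entropy_integrand_def N_def K_def .
qed

lemma antimono_dominated_integral:
  fixes f g :: "real \<Rightarrow> real"
  assumes "antimono_on {a<..b} f" "\<And>x. x \<in> {a<..b} \<Longrightarrow> \<bar>f x\<bar> \<le> g x" "g integrable_on {a..b}"
  shows "f integrable_on {a..b}" and "integral {a..b} f \<le> integral {a..b} g"
proof -
  have spike: "negligible {x \<in> S - T. h x \<noteq> 0}"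
    if "S \<subseteq> {a..b}" "{a<..b} \<subseteq> T" for S T and h :: "real \<Rightarrow> real"
  proof (rule negligible_subset[of "{a}"])
    show "{x \<in> S - T. h x \<noteq> 0} \<subseteq> {a}"
      using that by (force simp: subset_iff)
  qed simp
  have "mono_on {a<..b} (\<lambda>x. - f x)"
    using assms(1) by (simp add: monotone_on_def)
  moreover have "space lborel = space lebesgue" "sets borel \<subseteq> sets lebesgue"
    by force+
  ultimately have "(\<lambda>x. - f x) \<in> borel_measurable (lebesgue_on {a<..b})"
    by (metis borel_measurable_mono_on_fnc borel_measurable_subalgebra mono_restrict_space
        space_lborel space_restrict_space)
  then have "f \<in> borel_measurable (lebesgue_on {a<..b})"
    using borel_measurable_uminus by fastforce
  moreover have g: "g integrable_on {a<..b}"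
    by (rule integrable_spike_set[OF assms(3)]) (rule spike; auto)+
  ultimately have f: "f integrable_on {a<..b}"
    by (rule measurable_bounded_by_integrable_imp_integrable_real) (use assms(2) in auto)
  then show "f integrable_on {a..b}"
    by (rule integrable_spike_set) (rule spike; auto)+
  have "integral {a<..b} f \<le> integral {a<..b} g"
    using assms(2) by (intro integral_le f g) (simp add: abs_le_iff)
  moreover have "integral {a..b} h = integral {a<..b} h" for h :: "real \<Rightarrow> real"
    by (rule integral_spike_set) (rule spike; auto)+
  ultimately show "integral {a..b} f \<le> integral {a..b} g"
    by simp
qed

lemma entropy_integral_bounded:
  fixes M :: "(real^'m^'m) set"
  assumes "\<nu> \<in> M" "0 < \<delta>"
  defines "D \<equiv> real (CARD('m) * CARD('m))"
  defines "g \<equiv> \<lambda>\<epsilon>. 1 + sqrt (D * (2 * sqrt D + 3)) * \<epsilon> powr (-1/2)"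
  shows "entropy_integrand M \<nu> \<delta> integrable_on {0..1}"
    and "\<bar>integral {0..1} (entropy_integrand M \<nu> \<delta>)\<bar> \<le> integral {0..1} g"
proof -
  have "(\<lambda>\<epsilon>. \<epsilon> powr (-1/2)) integrable_on {0..1::real}"
    by (rule integrable_on_powr_from_0) auto
  then have g: "g integrable_on {0..1}"
    unfolding g_def by (intro integrable_add integrable_on_mult_right) auto
  have antimono: "antimono_on {0<..1} (entropy_integrand M \<nu> \<delta>)"
    using entropy_integrand_antimono[OF assms(1,2)] by (rule monotone_on_subset) auto
  have bound: "\<bar>entropy_integrand M \<nu> \<delta> \<epsilon>\<bar> \<le> g \<epsilon>" if "\<epsilon> \<in> {0<..1}" for \<epsilon>
    using entropy_integrand_ge_1[OF assms(1,2)] entropy_integrand_le[OF assms(1,2)] that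
    unfolding g_def D_def by force
  show "entropy_integrand M \<nu> \<delta> integrable_on {0..1}"
    using antimono_dominated_integral(1)[OF antimono bound g] .
  \<comment> \<open>\<open>sqrt\<close> is negative on negative arguments; here \<open>ln\<close> of a natural number is \<open>\<ge> 0\<close> since \<open>ln 0 = 0\<close>.\<close>
  moreover have "0 \<le> entropy_integrand M \<nu> \<delta> \<epsilon>" for \<epsilon>
    unfolding entropy_integrand_def by (cases "covering_number M (\<delta> * \<epsilon>) (frob_ball M \<nu> \<delta>)") auto
  ultimately have "0 \<le> integral {0..1} (entropy_integrand M \<nu> \<delta>)"
    by (rule integral_nonneg)
  then show "\<bar>integral {0..1} (entropy_integrand M \<nu> \<delta>)\<bar> \<le> integral {0..1} g"
    using antimono_dominated_integral(2)[OF antimono bound g] by simp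
qed

lemma entropy_integral_bigo:
  fixes M :: "(real^'m^'m) set"
  assumes "\<nu> \<in> M"
  shows "\<forall>\<^sub>F \<delta> in at_right 0. entropy_integrand M \<nu> \<delta> integrable_on {0..1}"
    and "(\<lambda>\<delta>. integral {0..1} (entropy_integrand M \<nu> \<delta>)) \<in> O[at_right 0](\<lambda>_. 1)"
proof -
  show "\<forall>\<^sub>F \<delta> in at_right 0. entropy_integrand M \<nu> \<delta> integrable_on {0..1}"
    using eventually_at_right_less[of 0] by eventually_elim (rule entropy_integral_bounded(1)[OF assms])
  obtain G where "\<And>\<delta>. 0 < \<delta> \<Longrightarrow> \<bar>integral {0..1} (entropy_integrand M \<nu> \<delta>)\<bar> \<le> G"
    using entropy_integral_bounded(2)[OF assms] by blast
  then show "(\<lambda>\<delta>. integral {0..1} (entropy_integrand M \<nu> \<delta>)) \<in> O[at_right 0](\<lambda>_. 1)"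
    using eventually_at_right_less[of 0] by (intro bigoI[where c = G]) (auto elim: eventually_mono)
qed

section \<open>Transport maps and the main result\<close>

lemma dist_transport: "dist (transport \<alpha> \<beta> \<omega>) (transport \<alpha> \<beta> \<zeta>) = dist \<omega> \<zeta>"
  by (simp add: transport_def dist_norm)

lemma dist_transport_le:
  "dist (transport \<alpha>1 \<beta>1 \<omega>) (transport \<alpha>2 \<beta>2 \<omega>) \<le> dist \<alpha>1 \<alpha>2 + dist \<beta>1 \<beta>2"
proof -
  have "transport \<alpha>1 \<beta>1 \<omega> - transport \<alpha>2 \<beta>2 \<omega> = (\<beta>1 - \<beta>2) - (\<alpha>1 - \<alpha>2)"
    by (simp add: transport_def algebra_simps)
  then show ?thesis
    using norm_triangle_ineq4[of "\<beta>1 - \<beta>2" "\<alpha>1 - \<alpha>2"] by (simp add: dist_norm)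
qed

lemma frechet_mean_properties:
  fixes M :: "(real^'m^'m) set" and Y :: "'a \<Rightarrow> real^'m^'m"
  assumes "compact M" "convex M" "M \<noteq> {}"
    and "prob_space P" "Y \<in> borel_measurable P" "\<forall>x\<in>space P. Y x \<in> M"
  shows "\<exists>\<nu>. \<nu> \<in> M
          \<and> (\<forall>\<omega>\<in>M. (\<integral>x. (dist (Y x) \<nu>)^2 \<partial>P) \<le> (\<integral>x. (dist (Y x) \<omega>)^2 \<partial>P))
          \<and> (\<forall>\<nu>'\<in>M. (\<forall>\<omega>\<in>M. (\<integral>x. (dist (Y x) \<nu>')^2 \<partial>P) \<le> (\<integral>x. (dist (Y x) \<omega>)^2 \<partial>P))
                 \<longrightarrow> \<nu>' = \<nu>)
          \<and> (\<forall>\<epsilon>>0. (INF \<omega>\<in>{\<omega>\<in>M. dist \<nu> \<omega> > \<epsilon>}. ereal (\<integral>x. (dist (Y x) \<omega>)^2 \<partial>P))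
                     > ereal (\<integral>x. (dist (Y x) \<nu>)^2 \<partial>P))
          \<and> (\<forall>\<^sub>F \<delta> in at_right 0. entropy_integrand M \<nu> \<delta> integrable_on {0..1})
          \<and> (\<lambda>\<delta>. integral {0..1} (entropy_integrand M \<nu> \<delta>)) \<in> O[at_right 0](\<lambda>_. 1)
          \<and> (\<exists>\<eta>>0. \<exists>C>0. \<exists>\<kappa>>1. \<forall>\<omega>\<in>M. dist \<nu> \<omega> < \<eta> \<longrightarrow>
               (\<integral>x. (dist (Y x) \<omega>)^2 \<partial>P) - (\<integral>x. (dist (Y x) \<nu>)^2 \<partial>P) \<ge> C * dist \<nu> \<omega> powr \<kappa>)"
proof -
  define F where "F \<omega> = (\<integral>x. (dist (Y x) \<omega>)^2 \<partial>P)" for \<omega>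
  obtain \<nu> where "\<nu> \<in> M" and growth: "\<And>\<omega>. \<omega> \<in> M \<Longrightarrow> F \<nu> + 1 * (dist \<nu> \<omega>)^2 \<le> F \<omega>"
    using frechet_mean_quadratic_growth[OF assms(1-5)] assms(6) unfolding F_def by auto
  have "\<forall>\<omega>\<in>M. F \<nu> \<le> F \<omega>"
    using growth zero_le_power2 by (smt (verit))
  moreover have "\<forall>\<nu>'\<in>M. (\<forall>\<omega>\<in>M. F \<nu>' \<le> F \<omega>) \<longrightarrow> \<nu>' = \<nu>"
    using unique_minimizer_of_quadratic_growth[of 1 M F \<nu>] growth \<open>\<nu> \<in> M\<close> by auto
  moreover have "\<forall>\<epsilon>>0. (INF \<omega>\<in>{\<omega>\<in>M. dist \<nu> \<omega> > \<epsilon>}. ereal (F \<omega>)) > ereal (F \<nu>)"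
    using well_separated_of_quadratic_growth[of 1 M F \<nu>] growth by auto
  moreover have "\<exists>\<eta>>0. \<exists>C>0. \<exists>\<kappa>>1. \<forall>\<omega>\<in>M. dist \<nu> \<omega> < \<eta> \<longrightarrow> F \<omega> - F \<nu> \<ge> C * dist \<nu> \<omega> powr \<kappa>"
  proof -
    have "\<forall>\<omega>\<in>M. dist \<nu> \<omega> < 1 \<longrightarrow> F \<omega> - F \<nu> \<ge> 1 * dist \<nu> \<omega> powr 2"
      using growth by (simp add: le_diff_eq add.commute)
    moreover have "(0::real) < 1" "(1::real) < 2"
      by simp_all
    ultimately show ?thesis
      by blast
  qed
  ultimately show ?thesis
    using \<open>\<nu> \<in> M\<close> entropy_integral_bigo[OF \<open>\<nu> \<in> M\<close>] unfolding F_def by blast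
qed

theorem propositionS3:
  fixes M :: "(real^'m^'m) set" and c :: real
  assumes "0 < c"
    and "M = laplacian_space c \<or> M = covariance_space c"
  shows
   "(\<exists>C1>0. \<forall>\<alpha>\<in>M. \<forall>\<beta>\<in>M. \<forall>\<omega>\<in>M. \<forall>\<zeta>\<in>M.
        frob_dist (transport \<alpha> \<beta> \<omega>) (transport \<alpha> \<beta> \<zeta>) \<le> C1 * frob_dist \<omega> \<zeta>)
  \<and> (\<exists>C2>0. \<forall>\<alpha>1\<in>M. \<forall>\<alpha>2\<in>M. \<forall>\<beta>1\<in>M. \<forall>\<beta>2\<in>M. \<forall>\<omega>\<in>M.
        frob_dist (transport \<alpha>1 \<beta>1 \<omega>) (transport \<alpha>2 \<beta>2 \<omega>)
          \<le> C2 * (frob_dist \<alpha>1 \<alpha>2 + frob_dist \<beta>1 \<beta>2))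
  \<and> (\<forall>(P :: 'a measure) (Y :: 'a \<Rightarrow> real^'m^'m).
       prob_space P \<and> Y \<in> borel_measurable P \<and> (\<forall>x\<in>space P. Y x \<in> M) \<longrightarrow>
       (\<exists>\<nu>. \<nu> \<in> M
          \<and> (\<forall>\<omega>\<in>M. (\<integral>x. (frob_dist (Y x) \<nu>)^2 \<partial>P) \<le> (\<integral>x. (frob_dist (Y x) \<omega>)^2 \<partial>P))
          \<and> (\<forall>\<nu>'\<in>M. (\<forall>\<omega>\<in>M. (\<integral>x. (frob_dist (Y x) \<nu>')^2 \<partial>P) \<le> (\<integral>x. (frob_dist (Y x) \<omega>)^2 \<partial>P))
                 \<longrightarrow> \<nu>' = \<nu>)
          \<and> (\<forall>\<epsilon>>0. (INF \<omega>\<in>{\<omega>\<in>M. frob_dist \<nu> \<omega> > \<epsilon>}. ereal (\<integral>x. (frob_dist (Y x) \<omega>)^2 \<partial>P))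
                     > ereal (\<integral>x. (frob_dist (Y x) \<nu>)^2 \<partial>P))
          \<and> (\<forall>\<^sub>F \<delta> in at_right 0.
               (\<lambda>\<epsilon>. sqrt (1 + ln (real (covering_number M (\<delta> * \<epsilon>) (frob_ball M \<nu> \<delta>)))))
                 integrable_on {0..1})
          \<and> (\<lambda>\<delta>. integral {0..1}
                 (\<lambda>\<epsilon>. sqrt (1 + ln (real (covering_number M (\<delta> * \<epsilon>) (frob_ball M \<nu> \<delta>))))))
              \<in> O[at_right 0](\<lambda>_. 1)
          \<and> (\<exists>\<eta>>0. \<exists>C>0. \<exists>\<kappa>>1. \<forall>\<omega>\<in>M. frob_dist \<nu> \<omega> < \<eta> \<longrightarrow>
               (\<integral>x. (frob_dist (Y x) \<omega>)^2 \<partial>P) - (\<integral>x. (frob_dist (Y x) \<nu>)^2 \<partial>P)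
                 \<ge> C * frob_dist \<nu> \<omega> powr \<kappa>))
     \<and> (\<forall>Ys :: nat \<Rightarrow> 'a \<Rightarrow> real^'m^'m.
          prob_space.indep_vars P (\<lambda>_. borel) Ys UNIV
          \<and> (\<forall>i. Ys i \<in> borel_measurable P \<and> distr P borel (Ys i) = distr P borel Y) \<longrightarrow>
          (\<forall>n>0. AE x in P. \<exists>!\<omega>. \<omega> \<in> M \<and>
              (\<forall>\<zeta>\<in>M. (\<Sum>i<n. (frob_dist (Ys i x) \<omega>)^2) \<le> (\<Sum>i<n. (frob_dist (Ys i x) \<zeta>)^2)))))"
proof -
  have "compact M \<and> convex M \<and> 0 \<in> M"
    using assms(2,1)
    by (elim disjE)
      (simp_all add: compact_laplacian_space convex_laplacian_space zero_in_laplacian_space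
        compact_covariance_space convex_covariance_space zero_in_covariance_space)
  then have M: "compact M" "convex M" "M \<noteq> {}"
    by auto
  then have "closed M"
    by (simp add: compact_imp_closed)
  show ?thesis
    unfolding frob_dist_eq_dist entropy_integrand_def[symmetric]
    by (intro conjI allI impI AE_I2 exI[of _ "1::real"])
      (auto simp: dist_transport dist_transport_le empirical_frechet_mean_unique[OF \<open>closed M\<close> M(2,3)]
        intro: frechet_mean_properties[OF M])
qed

end
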